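(* Let $\varsigma,\lambda:[0,1]\to\mathbb{R}_{>0}$ be deterministic Hölder-continuous functions and $f>0$. For integrable $\phi:[0,1]\to\mathbb{R}_{>0}$ with $\int_0^1\phi(s)ds=1$ and integrable $\mu:[0,1]\to[0,\infty)$, consider the asymptotic variance $$V(\phi,\mu):=\frac{2}{f}\int_0^1\frac{\varsigma^4(r)\lambda^2(r)}{\phi(r)}dr+2\int_0^1\varsigma^4(r)\mu(r)dr+\int_0^1\varsigma^4(r)\lambda(r)dr.$$ Then $V(\phi,\mu)$ is minimized by the choice $$\phi(t)=\frac{\varsigma^2(t)\lambda(t)}{\int_0^1\varsigma^2(r)\lambda(r)dr},\qquad\mu(t)=0,$$ and the minimal value equals $\frac{2}{f}\mathrm{IV}^2+\mathrm{IQ}$, where $\mathrm{IV}=\int_0^1\varsigma^2(r)\lambda(r)dr$ and $\mathrm{IQ}=\int_0^1\varsigma^4(r)\lambda(r)dr$.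
   Context: $V(\phi,\mu)$ is the asymptotic variance of $\sqrt{T}(\mathrm{RV}(\boldsymbol{\tau}^T)-\mathrm{IV})$ for a realized variance estimator under a sampling scheme with sampling frequency $f$, sampling intensity function $\phi$ (the limiting normalized inverse of expected waiting times between sampling points) and $\mu$ (the limiting conditional variance rate of the number of ticks between adjacent sampling points), in a tick-time stochastic volatility model with rescaled tick volatility $\varsigma$ and trading intensity $\lambda$. *)

theory Defs
  imports "HOL-Analysis.Analysis"
begin

definition holder_continuous_on :: "real set \<Rightarrow> (real \<Rightarrow> real) \<Rightarrow> bool" where
  "holder_continuous_on S g \<longleftrightarrow>
     (\<exists>\<alpha> C. 0 < \<alpha> \<and> \<alpha> \<le> 1 \<and> 0 \<le> C \<and>
        (\<forall>x\<in>S. \<forall>y\<in>S. \<bar>g x - g y\<bar> \<le> C * \<bar>x - y\<bar> powr \<alpha>))"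

definition asym_var ::
  "real \<Rightarrow> (real \<Rightarrow> real) \<Rightarrow> (real \<Rightarrow> real) \<Rightarrow> (real \<Rightarrow> real) \<Rightarrow> (real \<Rightarrow> real) \<Rightarrow> ennreal" where
  "asym_var f sig lam \<phi> \<mu> =
     ennreal (2 / f) * (\<integral>\<^sup>+ r\<in>{0..1}. ennreal (sig r ^ 4 * lam r ^ 2 / \<phi> r) \<partial>lborel)
     + 2 * (\<integral>\<^sup>+ r\<in>{0..1}. ennreal (sig r ^ 4 * \<mu> r) \<partial>lborel)
     + (\<integral>\<^sup>+ r\<in>{0..1}. ennreal (sig r ^ 4 * lam r) \<partial>lborel)"

definition IV :: "(real \<Rightarrow> real) \<Rightarrow> (real \<Rightarrow> real) \<Rightarrow> real" where
  "IV sig lam = (LBINT r:{0..1}. sig r ^ 2 * lam r)"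

definition IQ :: "(real \<Rightarrow> real) \<Rightarrow> (real \<Rightarrow> real) \<Rightarrow> real" where
  "IQ sig lam = (LBINT r:{0..1}. sig r ^ 4 * lam r)"

definition admissible :: "(real \<Rightarrow> real) \<Rightarrow> (real \<Rightarrow> real) \<Rightarrow> bool" where
  "admissible \<phi> \<mu> \<longleftrightarrow>
     set_integrable lborel {0..1} \<phi> \<and> (\<forall>s\<in>{0..1}. 0 < \<phi> s) \<and> (LBINT s:{0..1}. \<phi> s) = 1 \<and>
     set_integrable lborel {0..1} \<mu> \<and> (\<forall>s\<in>{0..1}. 0 \<le> \<mu> s)"

end

theory Submission
  imports Defs
begin

text \<open>Integrating the pointwise AM-GM inequality \<open>2 t a \<le> a\<^sup>2/\<phi> + t\<^sup>2 \<phi>\<close> with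
  \<open>t = (\<integral>a) / (\<integral>\<phi>)\<close> gives the Cauchy-Schwarz bound \<open>(\<integral>a)\<^sup>2 / \<integral>\<phi> \<le> \<integral>a\<^sup>2/\<phi>\<close>, with
  equality when \<phi> is proportional to \<open>a\<close>. For \<open>a = \<sigma>\<^sup>2\<lambda>\<close> and \<open>\<integral>\<phi> = 1\<close> this bounds the first
  term of \<open>V\<close> below by \<open>IV\<^sup>2\<close>, attained at \<open>\<phi> = a / IV\<close>; the \<open>\<mu>\<close>-term is nonnegative and vanishes
  at \<open>\<mu> = 0\<close>, and the last term does not depend on the sampling scheme.\<close>

lemma holder_continuous_on_imp_continuous_on:
  assumes "holder_continuous_on S g"
  shows "continuous_on S g"
proof -
  obtain \<alpha> C where "0 < \<alpha>" "0 \<le> C"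
    and holder: "\<forall>x\<in>S. \<forall>y\<in>S. \<bar>g x - g y\<bar> \<le> C * \<bar>x - y\<bar> powr \<alpha>"
    using assms unfolding holder_continuous_on_def by blast
  show ?thesis unfolding continuous_on_def
  proof
    fix x assume x: "x \<in> S"
    have "((\<lambda>y. g y - g x) \<longlongrightarrow> 0) (at x within S)"
    proof (rule Lim_null_comparison)
      show "\<forall>\<^sub>F y in at x within S. norm (g y - g x) \<le> C * \<bar>y - x\<bar> powr \<alpha>"
        using holder x by (auto simp: eventually_at_filter)
      have "((\<lambda>y. \<bar>y - x\<bar> powr \<alpha>) \<longlongrightarrow> 0) (at x within S)"
        by (rule tendsto_zero_powrI) (auto intro!: tendsto_eq_intros \<open>0 < \<alpha>\<close>)
      then show "((\<lambda>y. C * \<bar>y - x\<bar> powr \<alpha>) \<longlongrightarrow> 0) (at x within S)"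
        using tendsto_mult_left[of _ 0 _ C] by fastforce
    qed
    then show "(g \<longlongrightarrow> g x) (at x within S)"
      by (simp add: LIM_zero_iff)
  qed
qed

lemma nn_set_integral_eq_set_integral':
  fixes h :: "'a \<Rightarrow> real"
  assumes "set_integrable M A h" "\<And>x. x \<in> A \<Longrightarrow> 0 \<le> h x"
  shows "(\<integral>\<^sup>+x\<in>A. ennreal (h x) \<partial>M) = ennreal (\<integral>x\<in>A. h x \<partial>M)"
proof -
  have "(\<integral>\<^sup>+x\<in>A. ennreal (h x) \<partial>M) = (\<integral>\<^sup>+x. ennreal (indicator A x *\<^sub>R h x) \<partial>M)"
    by (rule nn_integral_cong) (simp split: split_indicator)
  also have "\<dots> = ennreal (\<integral>x\<in>A. h x \<partial>M)"
    unfolding set_lebesgue_integral_def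
    by (rule nn_integral_eq_integral)
      (use assms in \<open>auto simp: set_integrable_def split: split_indicator\<close>)
  finally show ?thesis .
qed

lemma set_integral_Icc_pos:
  fixes g :: "real \<Rightarrow> real"
  assumes "continuous_on {a..b} g" "a < b" "\<And>x. x \<in> {a..b} \<Longrightarrow> 0 < g x"
  shows "0 < (LBINT x:{a..b}. g x)"
proof -
  obtain x\<^sub>0 where x\<^sub>0: "x\<^sub>0 \<in> {a..b}" "\<forall>y\<in>{a..b}. g x\<^sub>0 \<le> g y"
    using continuous_attains_inf[OF _ _ assms(1)] \<open>a < b\<close> by auto
  have "0 < (b - a) * g x\<^sub>0"
    using assms(2,3) x\<^sub>0(1) by simp
  also have "\<dots> = (LBINT x:{a..b}. g x\<^sub>0)"
    using \<open>a < b\<close> by (simp add: set_integral_const)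
  also have "\<dots> \<le> (LBINT x:{a..b}. g x)"
    by (rule set_integral_mono)
      (use x\<^sub>0 assms(1) in \<open>auto intro: borel_integrable_atLeastAtMost'\<close>)
  finally show ?thesis .
qed

lemma integral_square_div_le_nn_integral:
  fixes g p :: "'a \<Rightarrow> real"
  assumes g_int: "integrable M g" and p_int: "integrable M p"
    and g_nonneg: "\<And>x. 0 \<le> g x" and p_nonneg: "\<And>x. 0 \<le> p x"
    and g_vanishes: "\<And>x. p x = 0 \<Longrightarrow> g x = 0"
  shows "ennreal ((integral\<^sup>L M g)\<^sup>2 / integral\<^sup>L M p) \<le> (\<integral>\<^sup>+x. ennreal (g x ^ 2 / p x) \<partial>M)"
    (is "_ \<le> ?T")
proof -
  define I where "I = integral\<^sup>L M g"
  define c where "c = integral\<^sup>L M p"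
  define t where "t = I / c"
  have "0 \<le> I" "0 \<le> c"
    unfolding I_def c_def using g_nonneg p_nonneg by auto
  then have "0 \<le> t" unfolding t_def by simp
  have [measurable]: "g \<in> borel_measurable M" "p \<in> borel_measurable M"
    using g_int p_int by (auto intro: borel_measurable_integrable)
  have am_gm: "ennreal (2 * t * g x) \<le> ennreal (g x ^ 2 / p x) + ennreal (t\<^sup>2 * p x)" for x
  proof (cases "p x = 0")
    case False
    then have "0 < p x" using p_nonneg[of x] by simp
    have "2 * t * g x * p x \<le> g x ^ 2 + t\<^sup>2 * p x * p x"
      using sum_squares_ge_zero[of "g x - t * p x" 0] by (simp add: power2_eq_square algebra_simps)
    then have "2 * t * g x \<le> g x ^ 2 / p x + t\<^sup>2 * p x"
      using \<open>0 < p x\<close> by (simp add: field_simps power2_eq_square)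
    moreover have "ennreal (g x ^ 2 / p x + t\<^sup>2 * p x) = ennreal (g x ^ 2 / p x) + ennreal (t\<^sup>2 * p x)"
      using \<open>0 < p x\<close> by (intro ennreal_plus) auto
    ultimately show ?thesis
      by (metis ennreal_leI)
  qed (simp add: g_vanishes)
  have "(\<integral>\<^sup>+x. ennreal (2 * t * g x) \<partial>M) = ennreal (2 * t * I)"
    unfolding I_def
    by (subst nn_integral_eq_integral) (use g_int g_nonneg \<open>0 \<le> t\<close> in auto)
  moreover have "(\<integral>\<^sup>+x. ennreal (t\<^sup>2 * p x) \<partial>M) = ennreal (t\<^sup>2 * c)"
    unfolding c_def
    by (subst nn_integral_eq_integral) (use p_int p_nonneg in auto)
  moreover have "(\<integral>\<^sup>+x. ennreal (2 * t * g x) \<partial>M)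
      \<le> (\<integral>\<^sup>+x. ennreal (g x ^ 2 / p x) + ennreal (t\<^sup>2 * p x) \<partial>M)"
    by (rule nn_integral_mono) (rule am_gm)
  moreover have "\<dots> = ?T + (\<integral>\<^sup>+x. ennreal (t\<^sup>2 * p x) \<partial>M)"
    by (rule nn_integral_add) auto
  ultimately have integrated: "ennreal (2 * t * I) \<le> ?T + ennreal (t\<^sup>2 * c)"
    by simp
  show ?thesis
  proof (cases ?T rule: ennreal_cases)
    case (real T)
    have "ennreal T + ennreal (t\<^sup>2 * c) = ennreal (T + t\<^sup>2 * c)"
      using real \<open>0 \<le> c\<close> by (intro ennreal_plus[symmetric]) auto
    then have "ennreal (2 * t * I) \<le> ennreal (T + t\<^sup>2 * c)"
      using integrated real by metis
    then have "2 * t * I \<le> T + t\<^sup>2 * c"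
      using real \<open>0 \<le> c\<close> by (subst (asm) ennreal_le_iff) auto
    then have "I\<^sup>2 / c \<le> T"
      unfolding t_def using \<open>0 \<le> c\<close> \<open>0 \<le> I\<close>
      by (cases "c = 0") (auto simp: field_simps power2_eq_square)
    then show ?thesis
      using real by (simp add: I_def c_def ennreal_leI)
  qed simp
qed

lemma set_integral_square_div_le_nn_set_integral:
  fixes a \<phi> :: "'a \<Rightarrow> real"
  assumes "set_integrable M A a" "set_integrable M A \<phi>"
    and "\<And>x. x \<in> A \<Longrightarrow> 0 \<le> a x" "\<And>x. x \<in> A \<Longrightarrow> 0 < \<phi> x"
  shows "ennreal ((\<integral>x\<in>A. a x \<partial>M)\<^sup>2 / (\<integral>x\<in>A. \<phi> x \<partial>M))
    \<le> (\<integral>\<^sup>+x\<in>A. ennreal (a x ^ 2 / \<phi> x) \<partial>M)"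
proof -
  have "ennreal ((\<integral>x\<in>A. a x \<partial>M)\<^sup>2 / (\<integral>x\<in>A. \<phi> x \<partial>M))
      \<le> (\<integral>\<^sup>+x. ennreal ((indicator A x *\<^sub>R a x) ^ 2 / (indicator A x *\<^sub>R \<phi> x)) \<partial>M)"
    unfolding set_lebesgue_integral_def
    by (rule integral_square_div_le_nn_integral)
      (use assms in \<open>auto simp: set_integrable_def split: split_indicator
        dest: assms(4) intro: less_imp_le\<close>)
  also have "\<dots> = (\<integral>\<^sup>+x\<in>A. ennreal (a x ^ 2 / \<phi> x) \<partial>M)"
    \<comment> \<open>outside \<open>A\<close> the left integrand is \<open>0 / 0 = 0\<close>\<close>
    by (rule nn_integral_cong) (simp split: split_indicator)
  finally show ?thesis .
qed

context
  fixes sig lam :: "real \<Rightarrow> real"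
  assumes sig_cont: "continuous_on {0..1} sig" and lam_cont: "continuous_on {0..1} lam"
    and sig_pos: "\<forall>t\<in>{0..1}. 0 < sig t" and lam_pos: "\<forall>t\<in>{0..1}. 0 < lam t"
begin

lemma sig_power_mult_lam_pos: "t \<in> {0..1} \<Longrightarrow> 0 < sig t ^ n * lam t"
  using sig_pos lam_pos by simp

lemma set_integrable_IV_integrand: "set_integrable lborel {0..1} (\<lambda>r. sig r ^ 2 * lam r)"
  by (intro borel_integrable_atLeastAtMost' continuous_intros sig_cont lam_cont)

lemma IV_pos: "0 < IV sig lam"
  unfolding IV_def
  by (rule set_integral_Icc_pos)
    (auto intro!: continuous_intros sig_cont lam_cont sig_power_mult_lam_pos)

lemma nn_set_integral_IQ_integrand:
  "(\<integral>\<^sup>+r\<in>{0..1}. ennreal (sig r ^ 4 * lam r) \<partial>lborel) = ennreal (IQ sig lam)"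
  unfolding IQ_def
  by (rule nn_set_integral_eq_set_integral')
    (auto intro!: borel_integrable_atLeastAtMost' continuous_intros sig_cont lam_cont
      less_imp_le sig_power_mult_lam_pos)

lemma IQ_nonneg: "0 \<le> IQ sig lam"
  unfolding IQ_def set_lebesgue_integral_def
  by (rule Bochner_Integration.integral_nonneg)
    (auto simp: less_imp_le sig_power_mult_lam_pos split: split_indicator)

lemma admissible_optimal_intensity:
  "admissible (\<lambda>t. sig t ^ 2 * lam t / IV sig lam) (\<lambda>t. 0)"
  unfolding admissible_def
proof (intro conjI ballI)
  show "set_integrable lborel {0..1} (\<lambda>t. sig t ^ 2 * lam t / IV sig lam)"
    using IV_pos
    by (intro borel_integrable_atLeastAtMost' continuous_intros sig_cont lam_cont) auto
  show "0 < sig s ^ 2 * lam s / IV sig lam" if "s \<in> {0..1}" for s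
    using sig_power_mult_lam_pos[OF that] IV_pos by simp
  show "(LBINT s:{0..1}. sig s ^ 2 * lam s / IV sig lam) = 1"
    using IV_pos by (simp add: IV_def)
qed (simp_all add: set_integrable_def)

lemma asym_var_optimal:
  assumes "0 \<le> f"
  shows "asym_var f sig lam (\<lambda>t. sig t ^ 2 * lam t / IV sig lam) (\<lambda>t. 0)
    = ennreal (2 / f * (IV sig lam)\<^sup>2 + IQ sig lam)"
proof -
  have "(\<integral>\<^sup>+r\<in>{0..1}. ennreal (sig r ^ 4 * lam r ^ 2 / (sig r ^ 2 * lam r / IV sig lam)) \<partial>lborel)
      = (\<integral>\<^sup>+r\<in>{0..1}. ennreal (IV sig lam * (sig r ^ 2 * lam r)) \<partial>lborel)"
    by (rule set_nn_integral_cong)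
      (use sig_pos lam_pos IV_pos in \<open>auto simp: field_simps power2_eq_square power4_eq_xxxx\<close>)
  also have "\<dots> = ennreal (LBINT r:{0..1}. IV sig lam * (sig r ^ 2 * lam r))"
    by (rule nn_set_integral_eq_set_integral')
      (use set_integrable_IV_integrand IV_pos sig_power_mult_lam_pos in \<open>auto intro: less_imp_le\<close>)
  also have "\<dots> = ennreal ((IV sig lam)\<^sup>2)"
    by (simp add: IV_def power2_eq_square)
  finally show ?thesis
    unfolding asym_var_def nn_set_integral_IQ_integrand
    using assms IQ_nonneg by (simp add: ennreal_mult[symmetric] ennreal_plus)
qed

lemma asym_var_lower_bound:
  assumes "0 \<le> f" and "admissible \<phi> \<mu>"
  shows "ennreal (2 / f * (IV sig lam)\<^sup>2 + IQ sig lam) \<le> asym_var f sig lam \<phi> \<mu>"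
proof -
  have \<phi>: "set_integrable lborel {0..1} \<phi>" "\<And>s. s \<in> {0..1} \<Longrightarrow> 0 < \<phi> s"
    "(LBINT s:{0..1}. \<phi> s) = 1"
    using assms(2) unfolding admissible_def by auto
  have "ennreal ((IV sig lam)\<^sup>2)
      \<le> (\<integral>\<^sup>+r\<in>{0..1}. ennreal ((sig r ^ 2 * lam r) ^ 2 / \<phi> r) \<partial>lborel)"
    using set_integral_square_div_le_nn_set_integral[OF set_integrable_IV_integrand \<phi>(1) _ \<phi>(2)]
      sig_pos lam_pos \<phi>(3)
    by (simp add: IV_def less_imp_le)
  also have "\<dots> = (\<integral>\<^sup>+r\<in>{0..1}. ennreal (sig r ^ 4 * lam r ^ 2 / \<phi> r) \<partial>lborel)"
    by (simp add: power_mult_distrib flip: power_mult)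
  finally have first_term: "ennreal ((IV sig lam)\<^sup>2) \<le> \<dots>" .
  have "ennreal (2 / f * (IV sig lam)\<^sup>2 + IQ sig lam)
      = ennreal (2 / f) * ennreal ((IV sig lam)\<^sup>2) + 0 + ennreal (IQ sig lam)"
    using assms(1) IQ_nonneg by (simp add: ennreal_mult[symmetric] ennreal_plus)
  also have "\<dots> \<le> asym_var f sig lam \<phi> \<mu>"
    unfolding asym_var_def nn_set_integral_IQ_integrand
    by (intro add_mono mult_left_mono first_term) auto
  finally show ?thesis .
qed

end

theorem corollary2:
  fixes f :: real and sig lam :: "real \<Rightarrow> real"
  assumes "holder_continuous_on {0..1} sig" and "holder_continuous_on {0..1} lam"
    and "\<forall>t\<in>{0..1}. 0 < sig t" and "\<forall>t\<in>{0..1}. 0 < lam t"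
    and "0 < f"
  defines "\<phi>\<^sub>0 \<equiv> (\<lambda>t. sig t ^ 2 * lam t / IV sig lam)"
  shows "admissible \<phi>\<^sub>0 (\<lambda>t. 0)
    \<and> (\<forall>\<phi> \<mu>. admissible \<phi> \<mu> \<longrightarrow> asym_var f sig lam \<phi>\<^sub>0 (\<lambda>t. 0) \<le> asym_var f sig lam \<phi> \<mu>)
    \<and> asym_var f sig lam \<phi>\<^sub>0 (\<lambda>t. 0) = ennreal (2 / f * (IV sig lam)\<^sup>2 + IQ sig lam)"
proof -
  have cont: "continuous_on {0..1} sig" "continuous_on {0..1} lam"
    using assms(1,2) by (auto intro: holder_continuous_on_imp_continuous_on)
  have "0 \<le> f" using \<open>0 < f\<close> by simp
  have optimal_value:
    "asym_var f sig lam \<phi>\<^sub>0 (\<lambda>t. 0) = ennreal (2 / f * (IV sig lam)\<^sup>2 + IQ sig lam)"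
    unfolding \<phi>\<^sub>0_def by (rule asym_var_optimal[OF cont assms(3,4) \<open>0 \<le> f\<close>])
  show ?thesis
  proof (intro conjI allI impI)
    show "admissible \<phi>\<^sub>0 (\<lambda>t. 0)"
      unfolding \<phi>\<^sub>0_def by (rule admissible_optimal_intensity[OF cont assms(3,4)])
    fix \<phi> \<mu> assume "admissible \<phi> \<mu>"
    then show "asym_var f sig lam \<phi>\<^sub>0 (\<lambda>t. 0) \<le> asym_var f sig lam \<phi> \<mu>"
      unfolding optimal_value by (rule asym_var_lower_bound[OF cont assms(3,4) \<open>0 \<le> f\<close>])
  qed (rule optimal_value)
qed

end
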